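(* Let $\mathcal{C}$ be a binary cyclic code of length $n$ whose generator polynomial $g\in\mathbb{F}_2[X]$, $g\mid X^n-1$, of degree $r$, is a product of distinct irreducible polynomials. Then the burst-covering radius $b$ of $\mathcal{C}$ satisfies \[ b=r-\min_{(a_0,\dots,a_{r-1})\in\mathbb{F}_2^r}Z\bigl(g,(a_0,\dots,a_{r-1})\bigr), \] where $Z(g,(a_0,\dots,a_{r-1}))$ is the maximum length of a run of zeros in the LFSR sequence with connection polynomial $g$ and initial conditions $a_0,\dots,a_{r-1}$. Alternatively, \[ b=r-\min_{c\in\mathcal{C}^\perp}Z(c), \] where $Z(c)$ is the maximum length of a run of zeros in $c$, with $c$ viewed cyclically.
   Context: For $g(X)=X^r+\sum_{i=0}^{r-1}m_iX^i$, an LFSR sequence with connection polynomial $g$ is a binary sequence $(a_k)_{k\ge0}$ with $a_k=\sum_{i=0}^{r-1}m_ia_{k-r+i}$ for all $k\ge r$; $a_0,\dots,a_{r-1}$ are its initial conditions. The burst-covering radius of a code $\mathcal{C}\subseteq\mathbb{F}_2^n$ is the least $b$ such that for every $y\in\mathbb{F}_2^n$ there is $c\in\mathcal{C}$ with $\operatorname{supp}(y-c)\subseteq\{i,\dots,i+b-1\}$ (indices modulo $n$) for some $i$. $\mathcal{C}^\perp$ is the dual code of $\mathcal{C}$. *)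

theory Defs
  imports "HOL-Computational_Algebra.Polynomial" "HOL-Library.Extended_Nat"
    "Berlekamp_Zassenhaus.Finite_Field"
begin

text \<open>The binary field F_2, realised as the integers modulo CARD(bool) = 2.\<close>
type_synonym gf2 = "bool mod_ring"

function lfsr :: "gf2 poly \<Rightarrow> gf2 list \<Rightarrow> nat \<Rightarrow> gf2" where
  "lfsr g a k = (if k < degree g then a ! k
                 else (\<Sum>i<degree g. coeff g i * lfsr g a (k - degree g + i)))"
  by auto
termination
  by (relation "measure (\<lambda>(g, a, k). k)") auto

definition max_zero_run_seq :: "(nat \<Rightarrow> gf2) \<Rightarrow> enat" where
  "max_zero_run_seq s = (SUP L \<in> {L. \<exists>k. \<forall>j<L. s (k + j) = 0}. enat L)"

definition Z_lfsr :: "gf2 poly \<Rightarrow> gf2 list \<Rightarrow> enat" where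
  "Z_lfsr g a = max_zero_run_seq (lfsr g a)"

text \<open>Maximum length of a run of zeros in a word c of length n, viewed cyclically
  (the zero word has value n).\<close>
definition max_zero_run_cyc :: "gf2 list \<Rightarrow> nat" where
  "max_zero_run_cyc c = Max {L. L \<le> length c \<and> (\<exists>i. \<forall>t<L. c ! ((i + t) mod length c) = 0)}"

definition cyclic_code :: "nat \<Rightarrow> gf2 poly \<Rightarrow> gf2 list set" where
  "cyclic_code n g = {c. length c = n \<and> g dvd Poly c}"

definition dual_code :: "nat \<Rightarrow> gf2 list set \<Rightarrow> gf2 list set" where
  "dual_code n C = {y. length y = n \<and> (\<forall>c\<in>C. (\<Sum>j<n. y ! j * c ! j) = 0)}"

definition in_burst :: "nat \<Rightarrow> nat \<Rightarrow> gf2 list \<Rightarrow> gf2 list \<Rightarrow> bool" where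
  "in_burst n b y c = (\<exists>i. \<forall>j<n. y ! j - c ! j \<noteq> 0 \<longrightarrow> (\<exists>t<b. j = (i + t) mod n))"

definition burst_covering_radius :: "nat \<Rightarrow> gf2 list set \<Rightarrow> nat" where
  "burst_covering_radius n C =
     (LEAST b. \<forall>y. length y = n \<longrightarrow> (\<exists>c\<in>C. in_burst n b y c))"

definition product_of_distinct_irreducibles :: "gf2 poly \<Rightarrow> bool" where
  "product_of_distinct_irreducibles g =
     (\<exists>fs. distinct fs \<and> (\<forall>f\<in>set fs. irreducible f) \<and> g = prod_list fs)"

end

theory Submission
  imports Defs
begin

(* Let r = deg g. Modulo g the indeterminate X is invertible, with X^n = 1. For a polynomial s
  the sequence u_s(k) = [X^(r-1)] (X^k s mod g) (top_coeff_seq s) satisfies the recurrence of g, and every LFSR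
  sequence of g is of this form. A run of m zeros of u_s starting at k says exactly that
  X^k s mod g has degree < r - m. On the other hand, a word y lies within a burst of length b
  of the code iff y = X^i e (mod g) for some e of degree < b, i.e. iff some X^k y mod g has
  degree < b, i.e. iff u_y contains a run of r - b zeros. So the bursts of length b cover
  exactly when r - b is at most the least maximal zero run of an LFSR sequence. The dual code
  consists of one period of each of the n-periodic sequences u_s, which gives the second
  formula. *)

declare lfsr.simps [simp del]

lemma gf2_cases: "(x::gf2) = 0 \<or> x = 1"
proof -
  obtain i where "i < CARD(bool)" "x = of_nat i"
    using surj_of_nat_mod_ring by blast
  then show ?thesis by (cases i) auto
qed

lemma gf2_add_self [simp]: "(x::gf2) + x = 0"
proof -
  have "(1::gf2) + 1 = of_nat CARD(bool)" by simp
  also have "\<dots> = 0" by (rule of_nat_card_eq_0)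
  finally show ?thesis using gf2_cases[of x] by auto
qed

lemma gf2_uminus [simp]: "- (x::gf2) = x"
  using gf2_add_self[of x] by (simp add: neg_eq_iff_add_eq_0)

lemma poly_mod_sum: "(\<Sum>i\<in>A. f i) mod (g::'a::field poly) = (\<Sum>i\<in>A. f i mod g)"
  by (induction A rule: infinite_finite_induct) (auto simp: poly_mod_add_left)

lemma poly_as_sum_of_monoms_lessThan:
  assumes "\<And>t. t \<ge> b \<Longrightarrow> coeff (p::'a::comm_ring_1 poly) t = 0"
  shows "(\<Sum>t<b. monom (coeff p t) t) = p"
proof (rule poly_eqI)
  fix j
  have "coeff (\<Sum>t<b. monom (coeff p t) t) j = (if j < b then coeff p j else 0)"
    by (simp add: coeff_sum coeff_monom sum.delta')
  then show "coeff (\<Sum>t<b. monom (coeff p t) t) j = coeff p j"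
    using assms by auto
qed

lemma Poly_map_coeff_upt:
  assumes "\<And>j. j \<ge> N \<Longrightarrow> coeff p j = 0"
  shows "Poly (map (coeff p) [0..<N]) = p"
proof (rule poly_eqI)
  fix j show "coeff (Poly (map (coeff p) [0..<N])) j = coeff p j"
    using assms by (cases "j < N") (auto simp: nth_default_def)
qed

lemma inj_on_add_mod:
  assumes "b \<le> n"
  shows "inj_on (\<lambda>t. (i + t) mod n) {..<(b::nat)}"
proof (rule inj_onI)
  fix t t' assume "t \<in> {..<b}" "t' \<in> {..<b}" "(i + t) mod n = (i + t') mod n"
  moreover from this have "t mod n = t' mod n"
    by (simp add: nat_mod_eq_iff)
  ultimately show "t = t'"
    using assms by simp
qed

lemma enat_le_max_zero_run_seq_iff:
  "enat L \<le> max_zero_run_seq u \<longleftrightarrow> (\<exists>k. \<forall>j<L. u (k + j) = 0)"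
proof
  assume "\<exists>k. \<forall>j<L. u (k + j) = 0"
  then show "enat L \<le> max_zero_run_seq u"
    unfolding max_zero_run_seq_def by (auto intro: SUP_upper)
next
  assume le: "enat L \<le> max_zero_run_seq u"
  show "\<exists>k. \<forall>j<L. u (k + j) = 0"
  proof (rule ccontr)
    assume no_run: "\<not> (\<exists>k. \<forall>j<L. u (k + j) = 0)"
    then have "L \<noteq> 0" by auto
    have shorter: "L' < L" if "\<forall>j<L'. u (k + j) = 0" for L' k
    proof (rule ccontr)
      assume "\<not> L' < L"
      with that have "\<forall>j<L. u (k + j) = 0" by auto
      with no_run show False by blast
    qed
    have "max_zero_run_seq u \<le> enat (L - 1)"
      unfolding max_zero_run_seq_def by (intro SUP_least) (auto dest: shorter)
    with le have "enat L \<le> enat (L - 1)" by (rule order_trans)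
    with \<open>L \<noteq> 0\<close> show False by simp
  qed
qed

lemma le_max_zero_run_cyc_iff:
  assumes "L \<le> length c"
  shows "L \<le> max_zero_run_cyc c \<longleftrightarrow> (\<exists>i. \<forall>t<L. c ! ((i + t) mod length c) = 0)"
proof -
  define R where "R = {L. L \<le> length c \<and> (\<exists>i. \<forall>t<L. c ! ((i + t) mod length c) = 0)}"
  have "finite R" by (rule finite_subset[of _ "{..length c}"]) (auto simp: R_def)
  moreover have "0 \<in> R" by (simp add: R_def)
  ultimately have "Max R \<in> R" by (auto intro: Max_in)
  then obtain i where "\<forall>t<Max R. c ! ((i + t) mod length c) = 0"
    by (auto simp: R_def)
  then have "L \<in> R" if "L \<le> Max R"
    using that assms unfolding R_def by (auto intro!: exI[of _ i])
  then have "L \<le> Max R \<longleftrightarrow> L \<in> R"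
    using \<open>finite R\<close> by auto
  moreover have "max_zero_run_cyc c = Max R"
    by (simp add: max_zero_run_cyc_def R_def)
  ultimately show ?thesis
    using assms by (simp add: R_def)
qed

lemma le_max_zero_run_cyc_periodic_iff:
  assumes "n \<ge> 1" and "\<And>k. u (k mod n) = u k" and "L \<le> n"
  shows "L \<le> max_zero_run_cyc (map u [0..<n]) \<longleftrightarrow> enat L \<le> max_zero_run_seq u"
  using le_max_zero_run_cyc_iff[of L "map u [0..<n]"] assms
  by (simp add: enat_le_max_zero_run_seq_iff)

lemma lfsr_eqI:
  assumes "\<And>k. k \<ge> degree g \<Longrightarrow> v k = (\<Sum>i<degree g. coeff g i * v (k - degree g + i))"
  shows "lfsr g (map v [0..<degree g]) k = v k"
proof (induction k rule: less_induct)
  case (less k)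
  show ?case
  proof (cases "k < degree g")
    case True
    then show ?thesis by (subst lfsr.simps) simp
  next
    case False
    then have "lfsr g (map v [0..<degree g]) k
        = (\<Sum>i<degree g. coeff g i * lfsr g (map v [0..<degree g]) (k - degree g + i))"
      by (subst lfsr.simps) simp
    also have "\<dots> = (\<Sum>i<degree g. coeff g i * v (k - degree g + i))"
      using False less by (intro sum.cong) auto
    finally show ?thesis using assms False by simp
  qed
qed

lemma monom_mult_mod_monom_mult:
  "(monom 1 k * ((monom 1 i * p) mod g)) mod g = (monom 1 (k + i) * p) mod (g::'a::field poly)"
  by (simp add: mod_mult_right_eq mult.assoc[symmetric] mult_monom)

lemma poly_eq_sum_over_burst:
  fixes D :: "'a::comm_ring_1 poly"
  assumes "b \<le> n" and "\<And>j. coeff D j \<noteq> 0 \<Longrightarrow> \<exists>t<b. j = (i + t) mod n"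
  shows "(\<Sum>t<b. monom (coeff D ((i + t) mod n)) ((i + t) mod n)) = D"
proof -
  define H where "H = (\<lambda>t. (i + t) mod n) ` {..<b}"
  have "(\<Sum>t<b. monom (coeff D ((i + t) mod n)) ((i + t) mod n)) = (\<Sum>j\<in>H. monom (coeff D j) j)"
    by (simp add: H_def sum.reindex[OF inj_on_add_mod[OF assms(1)]])
  also have "\<dots> = D"
  proof (rule poly_eqI)
    fix k
    have "coeff (\<Sum>j\<in>H. monom (coeff D j) j) k = (if k \<in> H then coeff D k else 0)"
      by (simp add: H_def coeff_sum coeff_monom)
    then show "coeff (\<Sum>j\<in>H. monom (coeff D j) j) k = coeff D k"
      using assms(2) by (auto simp: H_def)
  qed
  finally show ?thesis .
qed

lemma coeff_sum_monom_mod_eq_0: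
  assumes "n > 0" and "j \<ge> n"
  shows "coeff (\<Sum>t\<in>T. monom (a t) (h t mod n)) j = (0::'a::comm_monoid_add)"
proof -
  have "h t mod n \<noteq> j" for t
    using assms mod_less_divisor[of n "h t"] by linarith
  then show ?thesis by (simp add: coeff_sum coeff_monom)
qed

lemma sum_mult_coeff_sum_monom:
  fixes a :: "'b \<Rightarrow> 'a::comm_ring_1"
  assumes "finite T" and "\<And>t. t \<in> T \<Longrightarrow> h t < n"
  shows "(\<Sum>j<n. x j * coeff (\<Sum>t\<in>T. monom (a t) (h t)) j) = (\<Sum>t\<in>T. a t * x (h t))"
proof -
  have "(\<Sum>j<n. x j * coeff (\<Sum>t\<in>T. monom (a t) (h t)) j)
      = (\<Sum>j<n. \<Sum>t\<in>T. x j * (if h t = j then a t else 0))"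
    by (simp add: coeff_sum coeff_monom sum_distrib_left)
  also have "\<dots> = (\<Sum>t\<in>T. \<Sum>j<n. x j * (if h t = j then a t else 0))"
    by (rule sum.swap)
  also have "\<dots> = (\<Sum>t\<in>T. a t * x (h t))"
  proof (rule sum.cong[OF refl])
    fix t assume "t \<in> T"
    have "(\<Sum>j<n. x j * (if h t = j then a t else 0)) = (\<Sum>j<n. if h t = j then a t * x j else 0)"
      by (rule sum.cong) auto
    also have "\<dots> = a t * x (h t)"
      using assms(2) \<open>t \<in> T\<close> by simp
    finally show "(\<Sum>j<n. x j * (if h t = j then a t else 0)) = a t * x (h t)" .
  qed
  finally show ?thesis .
qed

locale cyclic_code_generator =
  fixes g :: "gf2 poly" and n :: nat
  assumes dvd_X_power_minus_1: "g dvd monom 1 n - 1"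
    and length_pos: "n \<ge> 1"
    and degree_pos: "degree g \<ge> 1"
begin

lemma g_nonzero: "g \<noteq> 0"
  using degree_pos by auto

lemma lead_coeff_eq_1: "coeff g (degree g) = 1"
  using gf2_cases[of "coeff g (degree g)"] g_nonzero by auto

lemma one_mod: "1 mod g = 1"
  using degree_pos by (simp add: mod_poly_less)

lemma degree_mod_less_degree: "degree (p mod g) < degree g"
  using degree_mod_less[OF g_nonzero, of p] degree_pos by auto

lemma degree_le_length: "degree g \<le> n"
proof -
  have "coeff (monom (1::gf2) n - 1) 0 \<noteq> 0"
    using length_pos by (simp add: coeff_monom)
  then have "monom (1::gf2) n - 1 \<noteq> 0" by (metis coeff_0)
  moreover have "degree (monom (1::gf2) n - 1) \<le> n"
    by (rule degree_diff_le) (simp_all add: degree_monom_le)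
  ultimately show ?thesis
    using dvd_imp_degree_le[OF dvd_X_power_minus_1] by linarith
qed

lemma monom_mult_mod_period: "(monom c q * p) mod g = (monom c (q mod n) * p) mod g"
proof -
  have "monom 1 n mod g = 1"
    using dvd_X_power_minus_1 by (simp add: poly_mod_diff_left one_mod flip: mod_eq_0_iff_dvd)
  then have "(monom 1 n) ^ (q div n) mod g = 1"
    by (metis one_mod power_mod power_one)
  moreover have "monom c q = (monom 1 n) ^ (q div n) * monom c (q mod n)"
    by (simp add: monom_power mult_monom)
  then have "(monom c q * p) mod g = (((monom 1 n) ^ (q div n) mod g) * (monom c (q mod n) * p)) mod g"
    by (simp add: mod_mult_left_eq mult.assoc)
  ultimately show ?thesis
    by simp
qed

lemma monom_mod_period: "monom c q mod g = monom c (q mod n) mod g"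
  using monom_mult_mod_period[of c q 1] by simp

lemma monom_mult_mod_inverse: "\<exists>k. (monom 1 (k + i) * p) mod g = p mod g"
proof
  have "i mod n < n"
    using length_pos by simp
  then have "n - i mod n + i = n + n * (i div n)"
    using mult_div_mod_eq[of n i] by linarith
  then have "(n - i mod n + i) mod n = 0"
    by simp
  then show "(monom 1 (n - i mod n + i) * p) mod g = p mod g"
    by (subst monom_mult_mod_period) simp
qed

lemma mod_eq_0_if_monom_mult_mod_eq_0:
  assumes "(monom 1 k * s) mod g = 0"
  shows "s mod g = 0"
proof -
  obtain j where "(monom 1 (j + k) * s) mod g = s mod g"
    using monom_mult_mod_inverse by blast
  then show ?thesis
    using assms monom_mult_mod_monom_mult[of j k s g] by simp
qed

definition top_coeff_seq :: "gf2 poly \<Rightarrow> nat \<Rightarrow> gf2" where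
  "top_coeff_seq s k = coeff ((monom 1 k * s) mod g) (degree g - 1)"

lemma top_coeff_seq_shift:
  "top_coeff_seq s (k + j) = top_coeff_seq ((monom 1 k * s) mod g) j"
  unfolding top_coeff_seq_def by (simp add: monom_mult_mod_monom_mult add.commute)

lemma top_coeff_seq_mod: "top_coeff_seq (s mod g) = top_coeff_seq s"
  using top_coeff_seq_shift[of s 0] by (auto simp: fun_eq_iff)

lemma top_coeff_seq_period: "top_coeff_seq s (k mod n) = top_coeff_seq s k"
  unfolding top_coeff_seq_def by (simp flip: monom_mult_mod_period)

lemma top_coeff_seq_diff: "top_coeff_seq (p - q) k = top_coeff_seq p k - top_coeff_seq q k"
  by (simp add: top_coeff_seq_def algebra_simps poly_mod_diff_left)

lemma top_coeff_seq_rec: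
  assumes "k \<ge> degree g"
  shows "top_coeff_seq s k = (\<Sum>i<degree g. coeff g i * top_coeff_seq s (k - degree g + i))"
proof -
  let ?r = "degree g"
  let ?S = "\<Sum>i<?r. monom (coeff g i) (k - ?r + i) * s"
  have g_split: "g = monom 1 ?r + (\<Sum>i<?r. monom (coeff g i) i)"
    using poly_as_sum_of_monoms[of g]
    by (simp add: lessThan_Suc_atMost[symmetric] lead_coeff_eq_1 add.commute)
  have "monom 1 (k - ?r) * s * g
      = monom 1 (k - ?r) * s * monom 1 ?r + monom 1 (k - ?r) * s * (\<Sum>i<?r. monom (coeff g i) i)"
    by (subst g_split) (simp add: distrib_left)
  also have "monom 1 (k - ?r) * s * monom 1 ?r = monom 1 k * s"
    using assms by (simp add: mult_monom mult.commute mult.left_commute)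
  also have "monom 1 (k - ?r) * s * (\<Sum>i<?r. monom (coeff g i) i) = ?S"
    by (simp add: sum_distrib_left mult_monom mult.commute mult.left_commute add.commute)
  finally have "monom 1 k * s = monom 1 (k - ?r) * s * g - ?S"
    by (simp add: algebra_simps)
  then have "(monom 1 k * s) mod g = - (?S mod g)"
    by (simp add: poly_mod_diff_left)
  also have "?S mod g = (\<Sum>i<?r. smult (coeff g i) ((monom 1 (k - ?r + i) * s) mod g))"
    by (simp add: poly_mod_sum mod_smult_left[symmetric] smult_monom_mult)
  finally show ?thesis by (simp add: top_coeff_seq_def coeff_sum)
qed

lemma lfsr_top_coeff_seq: "lfsr g (map (top_coeff_seq s) [0..<degree g]) = top_coeff_seq s"
  by (rule ext, rule lfsr_eqI) (rule top_coeff_seq_rec)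

lemma top_coeff_seq_zeros_imp:
  assumes "degree w < degree g" and "L \<le> degree g" and "\<forall>j<L. top_coeff_seq w j = 0"
  shows "\<forall>i\<ge>degree g - L. coeff w i = 0"
  using assms
proof (induction L arbitrary: w)
  case 0
  then show ?case by (auto intro: coeff_eq_0)
next
  case (Suc L)
  \<comment> \<open>A zero top coefficient means X w needs no reduction mod g, so the window slides by one.\<close>
  let ?r = "degree g"
  have "coeff w (?r - 1) = 0"
    using Suc.prems(1,3) by (auto simp: top_coeff_seq_def mod_poly_less)
  have top: "coeff w i = 0" if "i \<ge> ?r - 1" for i
  proof (cases "i = ?r - 1")
    case True
    with \<open>coeff w (?r - 1) = 0\<close> show ?thesis by simp
  next
    case False
    with that Suc.prems(1) show ?thesis by (intro coeff_eq_0) linarith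
  qed
  have "degree (monom 1 1 * w) < ?r"
  proof -
    have "degree (monom 1 1 * w) \<le> ?r - 1"
      by (rule degree_le) (use top degree_pos in \<open>auto simp: coeff_monom_mult\<close>)
    then show ?thesis using degree_pos by linarith
  qed
  moreover have "\<forall>j<L. top_coeff_seq (monom 1 1 * w) j = 0"
    using Suc.prems(3) by (auto simp: top_coeff_seq_def mult.assoc[symmetric] mult_monom)
  ultimately have "\<forall>i\<ge>?r - L. coeff (monom 1 1 * w) i = 0"
    using Suc.IH Suc.prems(2) by simp
  then show ?case
  proof (intro allI impI)
    fix i assume "?r - Suc L \<le> i"
    then have "?r - L \<le> Suc i" by linarith
    with \<open>\<forall>i\<ge>?r - L. coeff (monom 1 1 * w) i = 0\<close> show "coeff w i = 0"
      by (auto simp: coeff_monom_mult)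
  qed
qed

lemma top_coeff_seq_zeros_iff:
  assumes "degree w < degree g" and "L \<le> degree g"
  shows "(\<forall>j<L. top_coeff_seq w j = 0) \<longleftrightarrow> (\<forall>i\<ge>degree g - L. coeff w i = 0)"
proof
  assume "\<forall>j<L. top_coeff_seq w j = 0"
  then show "\<forall>i\<ge>degree g - L. coeff w i = 0"
    using top_coeff_seq_zeros_imp assms by blast
next
  assume high: "\<forall>i\<ge>degree g - L. coeff w i = 0"
  show "\<forall>j<L. top_coeff_seq w j = 0"
  proof (intro allI impI)
    fix j assume "j < L"
    then have shifted_high: "coeff (monom 1 j * w) i = 0" if "i \<ge> degree g - 1" for i
      using that high assms(2) by (auto simp: coeff_monom_mult)
    have "degree (monom 1 j * w) \<le> degree g - 1"
      by (rule degree_le) (use shifted_high in auto)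
    then have "degree (monom 1 j * w) < degree g"
      using degree_pos by linarith
    then show "top_coeff_seq w j = 0"
      using shifted_high by (simp add: top_coeff_seq_def mod_poly_less)
  qed
qed

lemma top_coeff_seq_eqI:
  assumes "degree v < degree g" and "degree w < degree g"
    and "\<And>j. j < degree g \<Longrightarrow> top_coeff_seq v j = top_coeff_seq w j"
  shows "v = w"
proof -
  have "degree (v - w) < degree g"
    using assms(1,2) by (rule degree_diff_less)
  moreover have "\<forall>j<degree g. top_coeff_seq (v - w) j = 0"
    using assms(3) by (simp add: top_coeff_seq_diff)
  ultimately have "\<forall>i. coeff (v - w) i = 0"
    using top_coeff_seq_zeros_imp[of "v - w" "degree g"] by simp
  then show ?thesis by (simp add: poly_eq_iff)
qed

lemma degree_Poly_less: "length a = degree g \<Longrightarrow> degree (Poly a) < degree g"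
proof -
  assume "length a = degree g"
  then have "degree (Poly a) \<le> degree g - 1"
    by (intro degree_le) (auto simp: nth_default_def)
  then show ?thesis using degree_pos by linarith
qed

lemma lfsr_sequences: "lfsr g ` {a. length a = degree g} = range top_coeff_seq"
proof
  let ?A = "{a::gf2 list. length a = degree g}"
  let ?init = "\<lambda>a. map (top_coeff_seq (Poly a)) [0..<degree g]"
  \<comment> \<open>The first r terms determine s mod g, so counting makes every initial segment occur.\<close>
  have "inj_on ?init ?A"
  proof (rule inj_onI)
    fix a b assume a: "a \<in> ?A" and b: "b \<in> ?A" and "?init a = ?init b"
    then have "Poly a = Poly b"
      by (intro top_coeff_seq_eqI) (auto simp: degree_Poly_less map_eq_conv)
    then have "nth_default 0 a = nth_default 0 b"
      by (metis coeff_Poly_eq)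
    with a b show "a = b"
      by (intro nth_equalityI) (auto simp: nth_default_def fun_eq_iff split: if_splits)
  qed
  moreover have "finite ?A"
    using finite_lists_length_eq[of "UNIV :: gf2 set" "degree g"] by simp
  ultimately have init_onto: "?init ` ?A = ?A"
    by (intro endo_inj_surj) auto
  show "lfsr g ` ?A \<subseteq> range top_coeff_seq"
  proof
    fix u assume "u \<in> lfsr g ` ?A"
    then obtain a where "a \<in> ?init ` ?A" and "u = lfsr g a"
      using init_onto by auto
    then obtain b where "u = lfsr g (?init b)"
      by blast
    then show "u \<in> range top_coeff_seq"
      by (simp add: lfsr_top_coeff_seq)
  qed
  show "range top_coeff_seq \<subseteq> lfsr g ` ?A"
  proof
    fix u assume "u \<in> range top_coeff_seq"
    then obtain s where "u = lfsr g (map (top_coeff_seq s) [0..<degree g])"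
      by (auto simp: lfsr_top_coeff_seq)
    then show "u \<in> lfsr g ` ?A" by auto
  qed
qed

lemma max_zero_run_top_coeff_seq_less:
  assumes "s mod g \<noteq> 0"
  shows "max_zero_run_seq (top_coeff_seq s) < enat (degree g)"
proof (rule ccontr)
  assume "\<not> ?thesis"
  then obtain k where "\<forall>j<degree g. top_coeff_seq s (k + j) = 0"
    by (auto simp: not_less enat_le_max_zero_run_seq_iff)
  then have "\<forall>j<degree g. top_coeff_seq ((monom 1 k * s) mod g) j = 0"
    by (simp add: top_coeff_seq_shift)
  then have "\<forall>i. coeff ((monom 1 k * s) mod g) i = 0"
    using top_coeff_seq_zeros_imp[OF degree_mod_less_degree order.refl] by simp
  then have "(monom 1 k * s) mod g = 0"
    by (simp add: poly_eq_iff)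
  then have "s mod g = 0"
    by (rule mod_eq_0_if_monom_mult_mod_eq_0)
  with assms show False ..
qed

lemma monom_mult_mod_wrap:
  assumes "\<And>t. t \<ge> b \<Longrightarrow> coeff e t = 0"
  shows "(\<Sum>t<b. monom (coeff e t) ((i + t) mod n)) mod g = (monom 1 i * e) mod g"
proof -
  have "(\<Sum>t<b. monom (coeff e t) (i + t)) = monom 1 i * (\<Sum>t<b. monom (coeff e t) t)"
    by (simp add: sum_distrib_left mult_monom)
  also have "\<dots> = monom 1 i * e"
    by (simp only: poly_as_sum_of_monoms_lessThan[OF assms])
  finally have shifted: "(\<Sum>t<b. monom (coeff e t) (i + t)) = monom 1 i * e" .
  have "(\<Sum>t<b. monom (coeff e t) ((i + t) mod n)) mod g = (\<Sum>t<b. monom (coeff e t) (i + t) mod g)"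
    by (simp add: poly_mod_sum flip: monom_mod_period)
  also have "\<dots> = (\<Sum>t<b. monom (coeff e t) (i + t)) mod g"
    by (simp add: poly_mod_sum)
  finally show ?thesis
    by (simp only: shifted)
qed

lemma map_coeff_in_cyclic_code:
  assumes "\<And>j. j \<ge> n \<Longrightarrow> coeff p j = 0" and "p mod g = 0"
  shows "map (coeff p) [0..<n] \<in> cyclic_code n g"
  using Poly_map_coeff_upt[OF assms(1)] assms(2) by (simp add: cyclic_code_def mod_eq_0_iff_dvd)

definition burst_coverable :: "nat \<Rightarrow> gf2 list \<Rightarrow> bool" where
  "burst_coverable b y \<longleftrightarrow> (\<exists>c\<in>cyclic_code n g. in_burst n b y c)"

lemma burst_coverable_if_mod_eq:
  assumes y: "length y = n"
    and e: "\<And>t. t \<ge> b \<Longrightarrow> coeff e t = 0"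
    and ie: "(monom 1 i * e) mod g = Poly y mod g"
  shows "burst_coverable b y"
proof -
  define E where "E = (\<Sum>t<b. monom (coeff e t) ((i + t) mod n))"
  have E_outside: "coeff E j = 0" if "\<not> (\<exists>t<b. j = (i + t) mod n)" for j
    using that by (auto simp: E_def coeff_sum coeff_monom intro!: sum.neutral)
  define c where "c = map (coeff (Poly y - E)) [0..<n]"
  have "coeff (Poly y - E) j = 0" if "j \<ge> n" for j
    using that y length_pos coeff_sum_monom_mod_eq_0[of n j]
    by (simp add: E_def nth_default_def)
  moreover have "E mod g = Poly y mod g"
    using monom_mult_mod_wrap[OF e] ie by (simp add: E_def)
  then have "(Poly y - E) mod g = 0"
    by (simp add: poly_mod_diff_left)
  ultimately have "c \<in> cyclic_code n g"
    unfolding c_def by (rule map_coeff_in_cyclic_code)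
  moreover have "in_burst n b y c"
    unfolding in_burst_def
  proof (rule exI[of _ i], intro allI impI)
    fix j assume "j < n" and "y ! j - c ! j \<noteq> 0"
    then have "coeff E j \<noteq> 0"
      using y by (simp add: c_def nth_default_def)
    then show "\<exists>t<b. j = (i + t) mod n"
      using E_outside by blast
  qed
  ultimately show ?thesis
    unfolding burst_coverable_def by blast
qed

lemma burst_coverable_imp_mod_eq:
  assumes y: "length y = n" and "b \<le> n" and "burst_coverable b y"
  obtains i e where "\<And>t. t \<ge> b \<Longrightarrow> coeff e t = 0" and "(monom 1 i * e) mod g = Poly y mod g"
proof -
  obtain c i where c: "c \<in> cyclic_code n g"
    and burst: "\<forall>j<n. y ! j - c ! j \<noteq> 0 \<longrightarrow> (\<exists>t<b. j = (i + t) mod n)"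
    using assms(3) unfolding burst_coverable_def in_burst_def by blast
  have "length c = n" and "g dvd Poly c"
    using c by (auto simp: cyclic_code_def)
  define D where "D = Poly y - Poly c"
  have "coeff D j = (if j < n then y ! j - c ! j else 0)" for j
    using y \<open>length c = n\<close> by (simp add: D_def nth_default_def)
  with burst have D_burst: "(\<Sum>t<b. monom (coeff D ((i + t) mod n)) ((i + t) mod n)) = D"
    by (intro poly_eq_sum_over_burst[OF assms(2)]) (auto split: if_splits)
  define e where "e = (\<Sum>t<b. monom (coeff D ((i + t) mod n)) t)"
  have coeff_e: "coeff e t = (if t < b then coeff D ((i + t) mod n) else 0)" for t
    by (simp add: e_def coeff_sum coeff_monom)
  then have "(monom 1 i * e) mod g = D mod g"
    using monom_mult_mod_wrap[of b e i] D_burst by simp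
  also have "D mod g = Poly y mod g"
    using \<open>g dvd Poly c\<close> by (simp add: D_def poly_mod_diff_left)
  finally have "(monom 1 i * e) mod g = Poly y mod g" .
  moreover have "coeff e t = 0" if "t \<ge> b" for t
    using that by (simp add: coeff_e)
  ultimately show thesis
    using that by blast
qed

lemma burst_coverable_iff_zero_run:
  assumes y: "length y = n" and "b \<le> n"
  shows "burst_coverable b y \<longleftrightarrow> enat (degree g - b) \<le> max_zero_run_seq (top_coeff_seq (Poly y))"
proof
  assume "burst_coverable b y"
  then obtain i e where e: "\<And>t. t \<ge> b \<Longrightarrow> coeff e t = 0"
    and ie: "(monom 1 i * e) mod g = Poly y mod g"
    using burst_coverable_imp_mod_eq[OF assms] by blast
  show "enat (degree g - b) \<le> max_zero_run_seq (top_coeff_seq (Poly y))"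
  proof (cases "b < degree g")
    case False
    then show ?thesis by (simp add: zero_enat_def[symmetric])
  next
    case True
    have "degree e \<le> b - 1"
      by (rule degree_le) (use e in auto)
    with True have "degree e < degree g" by linarith
    obtain k where "(monom 1 (k + i) * e) mod g = e mod g"
      using monom_mult_mod_inverse by blast
    then have "(monom 1 k * Poly y) mod g = e"
      using monom_mult_mod_monom_mult[of k i e g] ie \<open>degree e < degree g\<close>
      by (metis mod_mult_right_eq mod_poly_less)
    moreover have "\<forall>j<degree g - b. top_coeff_seq e j = 0"
      using top_coeff_seq_zeros_iff[OF \<open>degree e < degree g\<close>, of "degree g - b"] e True by simp
    ultimately show ?thesis
      by (auto simp: enat_le_max_zero_run_seq_iff top_coeff_seq_shift)
  qed
next
  assume "enat (degree g - b) \<le> max_zero_run_seq (top_coeff_seq (Poly y))"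
  then obtain k where "\<forall>j<degree g - b. top_coeff_seq ((monom 1 k * Poly y) mod g) j = 0"
    by (auto simp: enat_le_max_zero_run_seq_iff top_coeff_seq_shift)
  then have w: "coeff ((monom 1 k * Poly y) mod g) t = 0" if "t \<ge> b" for t
    using top_coeff_seq_zeros_iff[OF degree_mod_less_degree, of "degree g - b"] that by auto
  obtain i where "(monom 1 (i + k) * Poly y) mod g = Poly y mod g"
    using monom_mult_mod_inverse by blast
  then have "(monom 1 i * ((monom 1 k * Poly y) mod g)) mod g = Poly y mod g"
    by (simp add: monom_mult_mod_monom_mult)
  with y w show "burst_coverable b y"
    by (rule burst_coverable_if_mod_eq)
qed

definition min_zero_run :: enat where
  "min_zero_run = (INF s. max_zero_run_seq (top_coeff_seq s))"

lemma min_zero_run_less: "min_zero_run < enat (degree g)"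
proof -
  have "min_zero_run \<le> max_zero_run_seq (top_coeff_seq 1)"
    unfolding min_zero_run_def by (rule INF_lower) simp
  also have "\<dots> < enat (degree g)"
    by (rule max_zero_run_top_coeff_seq_less) (simp add: one_mod)
  finally show ?thesis .
qed

lemma INF_Z_lfsr_eq_min_zero_run:
  "(INF a \<in> {a. length a = degree g}. Z_lfsr g a) = min_zero_run"
proof -
  have "(INF u \<in> lfsr g ` {a. length a = degree g}. max_zero_run_seq u) = min_zero_run"
    unfolding lfsr_sequences min_zero_run_def by (simp add: image_image)
  then show ?thesis
    by (simp add: Z_lfsr_def image_image)
qed

lemma all_burst_coverable_iff:
  assumes "b \<le> n"
  shows "(\<forall>y. length y = n \<longrightarrow> burst_coverable b y) \<longleftrightarrow> enat (degree g - b) \<le> min_zero_run"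
proof -
  have "(\<forall>y. length y = n \<longrightarrow> burst_coverable b y)
      \<longleftrightarrow> (\<forall>y. length y = n \<longrightarrow> enat (degree g - b) \<le> max_zero_run_seq (top_coeff_seq (Poly y)))"
    using burst_coverable_iff_zero_run assms by auto
  also have "\<dots> \<longleftrightarrow> (\<forall>s. enat (degree g - b) \<le> max_zero_run_seq (top_coeff_seq s))"
  proof (intro iffI allI)
    fix s
    assume all_words: "\<forall>y. length y = n \<longrightarrow> enat (degree g - b) \<le> max_zero_run_seq (top_coeff_seq (Poly y))"
    define y where "y = map (coeff (s mod g)) [0..<n]"
    have "Poly y = s mod g"
      unfolding y_def using degree_mod_less_degree[of s] degree_le_length
      by (intro Poly_map_coeff_upt coeff_eq_0) linarith
    with all_words show "enat (degree g - b) \<le> max_zero_run_seq (top_coeff_seq s)"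
      by (metis top_coeff_seq_mod length_map diff_zero length_upt y_def)
  qed auto
  also have "\<dots> \<longleftrightarrow> enat (degree g - b) \<le> min_zero_run"
    by (simp add: min_zero_run_def le_INF_iff)
  finally show ?thesis .
qed

lemma burst_covering_radius_eq:
  assumes "min_zero_run = enat m"
  shows "burst_covering_radius n (cyclic_code n g) = degree g - m"
  unfolding burst_covering_radius_def burst_coverable_def[symmetric]
proof (rule Least_equality)
  have "m < degree g"
    using min_zero_run_less assms by simp
  then show "\<forall>y. length y = n \<longrightarrow> burst_coverable (degree g - m) y"
    using all_burst_coverable_iff[of "degree g - m"] assms degree_le_length by simp
  fix b assume "\<forall>y. length y = n \<longrightarrow> burst_coverable b y"
  then show "degree g - m \<le> b"
    using all_burst_coverable_iff[of b] assms degree_le_length \<open>m < degree g\<close>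
    by (cases "b \<le> n") auto
qed

lemma top_coeff_seq_in_dual_code: "map (top_coeff_seq s) [0..<n] \<in> dual_code n (cyclic_code n g)"
  unfolding dual_code_def
proof (intro CollectI conjI ballI)
  show "length (map (top_coeff_seq s) [0..<n]) = n" by simp
  fix c assume "c \<in> cyclic_code n g"
  then have "length c = n" and "g dvd Poly c"
    unfolding cyclic_code_def by auto
  then have "Poly c = (\<Sum>j<n. monom (c ! j) j)"
    using poly_as_sum_of_monoms_lessThan[of n "Poly c"] by (simp add: nth_default_def)
  then have "Poly c * s = (\<Sum>j<n. smult (c ! j) (monom 1 j * s))"
    by (simp add: sum_distrib_right smult_monom_mult)
  then have "(\<Sum>j<n. top_coeff_seq s j * c ! j) = coeff ((Poly c * s) mod g) (degree g - 1)"
    by (simp add: top_coeff_seq_def poly_mod_sum coeff_sum mod_smult_left mult.commute)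
  also have "(Poly c * s) mod g = 0"
    using \<open>g dvd Poly c\<close> by simp
  finally show "(\<Sum>j<n. map (top_coeff_seq s) [0..<n] ! j * c ! j) = 0"
    by simp
qed

lemma dual_code_rec:
  assumes d: "d \<in> dual_code n (cyclic_code n g)" and "k \<ge> degree g"
  shows "d ! (k mod n) = (\<Sum>i<degree g. coeff g i * d ! ((k - degree g + i) mod n))"
proof -
  let ?r = "degree g"
  define Q where "Q = (\<Sum>t<Suc ?r. monom (coeff g t) ((k - ?r + t) mod n))"
  have "coeff Q j = 0" if "j \<ge> n" for j
    unfolding Q_def using that length_pos by (intro coeff_sum_monom_mod_eq_0) auto
  moreover have "Q mod g = 0"
    using monom_mult_mod_wrap[of "Suc ?r" g "k - ?r"] by (simp add: Q_def coeff_eq_0)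
  ultimately have "map (coeff Q) [0..<n] \<in> cyclic_code n g"
    by (rule map_coeff_in_cyclic_code)
  moreover have "\<forall>c\<in>cyclic_code n g. (\<Sum>j<n. d ! j * c ! j) = 0"
    using d by (simp add: dual_code_def)
  ultimately have "(\<Sum>j<n. d ! j * map (coeff Q) [0..<n] ! j) = 0"
    by blast
  moreover have "(\<Sum>j<n. d ! j * map (coeff Q) [0..<n] ! j) = (\<Sum>j<n. d ! j * coeff Q j)"
    by (rule sum.cong) auto
  ultimately have "0 = (\<Sum>j<n. d ! j * coeff Q j)"
    by metis
  also have "\<dots> = (\<Sum>t<Suc ?r. coeff g t * d ! ((k - ?r + t) mod n))"
    unfolding Q_def using length_pos by (intro sum_mult_coeff_sum_monom) auto
  also have "\<dots> = (\<Sum>i<?r. coeff g i * d ! ((k - ?r + i) mod n)) + d ! (k mod n)"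
    using assms(2) by (simp add: lead_coeff_eq_1)
  finally have "(\<Sum>i<?r. coeff g i * d ! ((k - ?r + i) mod n)) + d ! (k mod n) = 0"
    by (rule sym)
  then show ?thesis
    by (simp add: add_eq_0_iff)
qed

lemma dual_code_eq: "dual_code n (cyclic_code n g) = range (\<lambda>s. map (top_coeff_seq s) [0..<n])"
proof
  show "range (\<lambda>s. map (top_coeff_seq s) [0..<n]) \<subseteq> dual_code n (cyclic_code n g)"
    using top_coeff_seq_in_dual_code by auto
  show "dual_code n (cyclic_code n g) \<subseteq> range (\<lambda>s. map (top_coeff_seq s) [0..<n])"
  proof
    fix d assume d: "d \<in> dual_code n (cyclic_code n g)"
    define v where "v k = d ! (k mod n)" for k
    have "lfsr g (map v [0..<degree g]) = v"
      by (rule ext, rule lfsr_eqI) (simp add: v_def dual_code_rec[OF d])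
    moreover have "lfsr g (map v [0..<degree g]) \<in> range top_coeff_seq"
      unfolding lfsr_sequences[symmetric] by simp
    ultimately obtain s where "v = top_coeff_seq s"
      by auto
    moreover have "d = map v [0..<n]"
      using d by (intro nth_equalityI) (auto simp: v_def dual_code_def)
    ultimately show "d \<in> range (\<lambda>s. map (top_coeff_seq s) [0..<n])"
      by auto
  qed
qed

lemma Min_max_zero_run_cyc_dual_code:
  assumes "min_zero_run = enat m"
  shows "Min (max_zero_run_cyc ` dual_code n (cyclic_code n g)) = m"
proof -
  let ?cyc = "\<lambda>s. max_zero_run_cyc (map (top_coeff_seq s) [0..<n])"
  have "Suc m \<le> n"
    using min_zero_run_less assms degree_le_length by simp
  have cyc_iff: "L \<le> ?cyc s \<longleftrightarrow> enat L \<le> max_zero_run_seq (top_coeff_seq s)" if "L \<le> n" for L s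
    by (rule le_max_zero_run_cyc_periodic_iff[where u = "top_coeff_seq s", OF length_pos top_coeff_seq_period that])
  have lower: "m \<le> ?cyc s" for s
  proof -
    have "enat m \<le> max_zero_run_seq (top_coeff_seq s)"
      unfolding assms[symmetric] min_zero_run_def by (rule INF_lower) simp
    with cyc_iff \<open>Suc m \<le> n\<close> show ?thesis by simp
  qed
  have "min_zero_run \<in> range (\<lambda>s. max_zero_run_seq (top_coeff_seq s))"
    unfolding min_zero_run_def by (rule wellorder_InfI) (rule rangeI)
  then obtain s0 where s0: "max_zero_run_seq (top_coeff_seq s0) = enat m"
    using assms by auto
  have "\<not> Suc m \<le> ?cyc s0"
    using cyc_iff[OF \<open>Suc m \<le> n\<close>] s0 by simp
  with lower[of s0] have "?cyc s0 = m"
    by linarith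
  have "finite (dual_code n (cyclic_code n g))"
  proof (rule finite_subset)
    show "dual_code n (cyclic_code n g) \<subseteq> {xs. length xs = n}"
      by (auto simp: dual_code_def)
    show "finite {xs :: gf2 list. length xs = n}"
      using finite_lists_length_eq[of "UNIV :: gf2 set" n] by simp
  qed
  then show ?thesis
  proof (rule Min_eqI[OF finite_imageI])
    show "z \<ge> m" if "z \<in> max_zero_run_cyc ` dual_code n (cyclic_code n g)" for z
      using that lower by (auto simp: dual_code_eq)
    have "?cyc s0 \<in> range ?cyc"
      by (rule rangeI)
    then show "m \<in> max_zero_run_cyc ` dual_code n (cyclic_code n g)"
      unfolding dual_code_eq image_image using \<open>?cyc s0 = m\<close> by simp
  qed
qed

end

theorem corollary3:
  fixes n r :: nat and g :: "gf2 poly"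
  assumes "n \<ge> 1"
    and "g dvd monom 1 n - 1"
    and "degree g = r"
    and "r \<ge> 1"
    and "product_of_distinct_irreducibles g"
  shows "enat (burst_covering_radius n (cyclic_code n g))
           = enat r - (INF a \<in> {a. length a = r}. Z_lfsr g a)
         \<and> burst_covering_radius n (cyclic_code n g)
           = r - Min (max_zero_run_cyc ` dual_code n (cyclic_code n g))"
proof -
  interpret cyclic_code_generator g n
    using assms(1-4) by unfold_locales simp_all
  obtain m where m: "min_zero_run = enat m"
    using min_zero_run_less by (cases min_zero_run) auto
  have "(INF a \<in> {a. length a = r}. Z_lfsr g a) = enat m"
    using INF_Z_lfsr_eq_min_zero_run m assms(3) by simp
  then show ?thesis
    using burst_covering_radius_eq[OF m] Min_max_zero_run_cyc_dual_code[OF m] assms(3) by simp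
qed

end
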